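(* Consider the multi-level, single-user caching problem described in the context, with $L$ levels, level $i$ having $N_i$ files and $K_i$ users, and cache memory $M\ge 0$. Let \[ H'=\{h\in\{1,\dots,L\}: M<N_h/K_h\},\qquad I'=\{1,\dots,L\}\setminus H'. \] Then the rate \[ R^{\mathrm{SU}}(M)=\sum_{h\in H'}K_h+\max\Big\{\frac{\sum_{i\in I'}N_i}{M}-1,\;0\Big\} \] is achievable (the second term being $0$ when $I'=\emptyset$).
   Context: Multi-level, single-user caching problem. A server holds $\sum_{i=1}^L N_i$ files of $F$ bits each, partitioned into $L$ popularity levels, level $i$ containing $N_i$ files. There are $K=\sum_{i=1}^L K_i$ caches (each $K_i\ge1$), each able to store $MF$ bits, and exactly one user connected to each cache. In a placement phase, before requests are known, arbitrary functions of the files are stored in the caches. In the delivery phase, exactly $K_i$ of the $K$ users request a file from level $i$, for each $i$; which users these are is not known in advance, and each such user may request any file of level $i$. The server sends one broadcast of $RF$ bits heard by all users, and each user must recover its requested file from the broadcast and its cache. A pair $(R,M)$ is achievable if there is a placement-and-delivery strategy with cache memory $M$ that, for every admissible assignment of users to levels and every admissible choice of requested files, uses a broadcast of rate at most $R$ satisfying all requests (with vanishing error probability as $F\to\infty$). Standing assumption: $N_i\ge K_i$ for every level $i$. *)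

theory Defs
  imports Complex_Main
begin

text \<open>Levels are 1..L; level i has N i files
and K i users (one user per cache). Users/caches are indexed 0..<total_users K L.
A library W assigns to file j of level i a bit string W i j of length F
(entries outside the index range are fixed to the empty list, so the set of
libraries is finite). Files are uniformly random, i.e. the error probability
is a count over all libraries divided by their number.\<close>

definition total_users :: "(nat \<Rightarrow> nat) \<Rightarrow> nat \<Rightarrow> nat" where
  "total_users K L = (\<Sum>i=1..L. K i)"

definition libraries :: "nat \<Rightarrow> (nat \<Rightarrow> nat) \<Rightarrow> nat \<Rightarrow> (nat \<Rightarrow> nat \<Rightarrow> bool list) set" where
  "libraries L N F = {W. \<forall>i j. if i \<in> {1..L} \<and> j < N i then length (W i j) = F else W i j = []}"

definition admissible_demand :: "nat \<Rightarrow> (nat \<Rightarrow> nat) \<Rightarrow> (nat \<Rightarrow> nat) \<Rightarrow> (nat \<Rightarrow> nat \<times> nat) \<Rightarrow> bool" where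
  "admissible_demand L N K d \<longleftrightarrow>
     (\<forall>k < total_users K L. fst (d k) \<in> {1..L} \<and> snd (d k) < N (fst (d k))) \<and>
     (\<forall>i \<in> {1..L}. card {k. k < total_users K L \<and> fst (d k) = i} = K i)"

text \<open>A placement-and-delivery scheme with file size F, cache size floor(M F) bits,
broadcast of floor(R F) bits, whose error probability (for uniformly random files)
is at most eps for every admissible demand. phi k = cache content of cache k,
psi d = broadcast for demand d, mu d k = decoder of user k.\<close>
definition scheme_exists :: "nat \<Rightarrow> (nat \<Rightarrow> nat) \<Rightarrow> (nat \<Rightarrow> nat) \<Rightarrow> real \<Rightarrow> real \<Rightarrow> nat \<Rightarrow> real \<Rightarrow> bool" where
  "scheme_exists L N K R M F eps \<longleftrightarrow>
     (\<exists>(phi :: nat \<Rightarrow> (nat \<Rightarrow> nat \<Rightarrow> bool list) \<Rightarrow> bool list)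
       (psi :: (nat \<Rightarrow> nat \<times> nat) \<Rightarrow> (nat \<Rightarrow> nat \<Rightarrow> bool list) \<Rightarrow> bool list)
       (mu :: (nat \<Rightarrow> nat \<times> nat) \<Rightarrow> nat \<Rightarrow> bool list \<Rightarrow> bool list \<Rightarrow> bool list).
        (\<forall>k W. length (phi k W) = nat \<lfloor>M * real F\<rfloor>) \<and>
        (\<forall>d W. length (psi d W) = nat \<lfloor>R * real F\<rfloor>) \<and>
        (\<forall>d. admissible_demand L N K d \<longrightarrow>
           real (card {W \<in> libraries L N F.
                   \<exists>k < total_users K L. mu d k (psi d W) (phi k W) \<noteq> W (fst (d k)) (snd (d k))})
           \<le> eps * real (card (libraries L N F))))"

definition achievable :: "nat \<Rightarrow> (nat \<Rightarrow> nat) \<Rightarrow> (nat \<Rightarrow> nat) \<Rightarrow> real \<Rightarrow> real \<Rightarrow> bool" where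
  "achievable L N K R M \<longleftrightarrow>
     (\<forall>eps > 0. \<exists>F0. \<forall>F \<ge> F0. scheme_exists L N K R M F eps)"

definition R_SU :: "nat \<Rightarrow> (nat \<Rightarrow> nat) \<Rightarrow> (nat \<Rightarrow> nat) \<Rightarrow> real \<Rightarrow> real" where
  "R_SU L N K M =
     (let H = {h \<in> {1..L}. M < real (N h) / real (K h)}; I = {1..L} - H in
      (\<Sum>h\<in>H. real (K h)) +
      (if I = {} then 0 else max ((\<Sum>i\<in>I. real (N i)) / M - 1) 0))"

end

theory Submission
  imports Defs "HOL-Analysis.Kronecker_Approximation_Theorem"
begin

text \<open>
  The levels in H' are served uncoded: each of their users receives its whole file. On the
  remaining files, \<open>N_I = \<Sum>i\<in>I'. N i\<close> of them, we run Maddah-Ali--Niesen coded caching with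
  \<open>Kv \<ge> K\<close> virtual users and a parameter t: every file is cut into \<open>Kv choose t\<close> subfiles
  indexed by the t-subsets T of the virtual users, cache k stores the subfiles with \<open>k \<in> T\<close>, and
  for every (t+1)-subset S the server sends the XOR over \<open>u \<in> S\<close> of the subfile indexed by
  \<open>S - {u}\<close> of the file of user u. Every user can decode its missing subfiles, the caches hold a
  fraction t/Kv of the coded files and the XORs cost \<open>(Kv - t)/(t + 1)\<close> file lengths.
  With \<open>x = M/N_I < 1\<close>, Dirichlet's approximation theorem yields Kv and t with
  \<open>t \<le> x Kv < t + 1 - x\<close>, i.e. the caches are large enough and \<open>(Kv - t)/(t + 1) < 1/x - 1\<close>;
  the strict gap pays, for large F, for the \<open>F mod (Kv choose t)\<close> leftover bits of each file,
  which are sent uncoded. If \<open>N_I \<le> M\<close> the caches simply hold all coded files.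
\<close>

definition pad :: "nat \<Rightarrow> bool list \<Rightarrow> bool list" where
  "pad m xs = take m (xs @ replicate m False)"

lemma length_pad [simp]: "length (pad m xs) = m"
  by (simp add: pad_def)

lemma take_length_pad: "length xs \<le> m \<Longrightarrow> take (length xs) (pad m xs) = xs"
  by (simp add: pad_def)

lemma take_drop_concat:
  "k < length xss \<Longrightarrow>
     take (length (xss ! k)) (drop (\<Sum>j<k. length (xss ! j)) (concat xss)) = xss ! k"
proof (induction xss arbitrary: k)
  case Nil
  then show ?case by simp
next
  case (Cons xs xss)
  show ?case
  proof (cases k)
    case (Suc i)
    then have "(\<Sum>j<k. length ((xs # xss) ! j)) = length xs + (\<Sum>j<i. length (xss ! j))"
      unfolding Suc sum.lessThan_Suc_shift by simp
    with Suc Cons show ?thesis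
      by simp
  qed simp
qed

lemma length_concat_map_const:
  "(\<And>x. x \<in> set xs \<Longrightarrow> length (g x) = s) \<Longrightarrow> length (concat (map g xs)) = length xs * s"
  by (induction xs) auto

definition block :: "nat \<Rightarrow> 'a list \<Rightarrow> nat \<Rightarrow> 'a list" where
  "block s w c = take s (drop (c * s) w)"

lemma block_concat_map:
  assumes "\<And>x. x \<in> set xs \<Longrightarrow> length (g x) = s" and "i < length xs"
  shows "block s (concat (map g xs)) i = g (xs ! i)"
proof -
  have "(\<Sum>j<i. length (map g xs ! j)) = i * s"
    using assms by simp
  with take_drop_concat[of i "map g xs"] assms show ?thesis
    by (simp add: block_def mult.commute)
qed

lemma concat_map_block:
  "n * s \<le> length w \<Longrightarrow> concat (map (block s w) [0..<n]) = take (n * s) w"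
proof (induction n)
  case 0
  then show ?case by simp
next
  case (Suc n)
  then have "concat (map (block s w) [0..<Suc n]) = take (n * s) w @ take s (drop (n * s) w)"
    by (simp add: block_def[of s w n])
  also have "\<dots> = take (n * s + s) w"
    by (simp only: take_add)
  also have "\<dots> = take (Suc n * s) w"
    by (simp add: add.commute)
  finally show ?case .
qed

definition position :: "'a list \<Rightarrow> 'a \<Rightarrow> nat" where
  "position xs x = the (map_of (zip xs [0..<length xs]) x)"

lemma position_nth: "distinct xs \<Longrightarrow> i < length xs \<Longrightarrow> position xs (xs ! i) = i"
  by (simp add: position_def map_of_zip_nth)

lemma position_less: "distinct xs \<Longrightarrow> x \<in> set xs \<Longrightarrow> position xs x < length xs"
  by (metis in_set_conv_nth position_nth)

lemma nth_position: "distinct xs \<Longrightarrow> x \<in> set xs \<Longrightarrow> xs ! position xs x = x"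
  by (metis in_set_conv_nth position_nth)

lemma block_position_concat_map:
  assumes "distinct xs" "x \<in> set xs" "\<And>y. y \<in> set xs \<Longrightarrow> length (g y) = s"
  shows "block s (concat (map g xs)) (position xs x) = g x"
  using assms by (simp add: block_concat_map position_less nth_position)

lemma map_position_eq_map_upt:
  "distinct xs \<Longrightarrow> map (\<lambda>x. f (position xs x)) xs = map f [0..<length xs]"
  by (rule nth_equalityI) (auto simp: position_nth)

definition xor_sum :: "'a set \<Rightarrow> ('a \<Rightarrow> bool list) \<Rightarrow> nat \<Rightarrow> bool list" where
  "xor_sum S y s = map (\<lambda>p. odd (card {u \<in> S. y u ! p})) [0..<s]"

lemma length_xor_sum [simp]: "length (xor_sum S y s) = s"
  by (simp add: xor_sum_def)

lemma xor_sum_cong: "(\<And>u. u \<in> S \<Longrightarrow> y u = y' u) \<Longrightarrow> xor_sum S y s = xor_sum S y' s"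
  unfolding xor_sum_def by (metis (mono_tags, lifting) Collect_cong)

lemma xor_sum_remove:
  assumes "finite S" "k \<in> S" "length (y k) = s"
  shows "map2 (\<noteq>) (xor_sum S y s) (xor_sum (S - {k}) y s) = y k"
proof (rule nth_equalityI)
  fix p assume "p < length (map2 (\<noteq>) (xor_sum S y s) (xor_sum (S - {k}) y s))"
  then have p: "p < s" by simp
  have "{u \<in> S. y u ! p} =
      (if y k ! p then insert k {u \<in> S - {k}. y u ! p} else {u \<in> S - {k}. y u ! p})"
    using assms by auto
  then show "map2 (\<noteq>) (xor_sum S y s) (xor_sum (S - {k}) y s) ! p = y k ! p"
    using p assms(1) by (simp add: xor_sum_def)
qed (use assms in simp)

definition distinct_list_of :: "'a set \<Rightarrow> 'a list" where
  "distinct_list_of A = (SOME xs. distinct xs \<and> set xs = A)"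

lemma distinct_list_of:
  "finite A \<Longrightarrow> distinct (distinct_list_of A) \<and> set (distinct_list_of A) = A"
  unfolding distinct_list_of_def by (metis (mono_tags, lifting) finite_distinct_list someI_ex)

lemma finite_subsets_of_card: "finite {T. T \<subseteq> {..<n::nat} \<and> card T = t}"
  by (rule finite_subset[of _ "Pow {..<n}"]) auto

lemma card_subsets_containing:
  assumes "k < n" "0 < t"
  shows "card {T. T \<subseteq> {..<n::nat} \<and> card T = t \<and> k \<in> T} \<le> (n - 1) choose (t - 1)"
proof -
  let ?A = "{T. T \<subseteq> {..<n} \<and> card T = t \<and> k \<in> T}"
  let ?B = "{T. T \<subseteq> {..<n} - {k} \<and> card T = t - 1}"
  have "inj_on (\<lambda>T. T - {k}) ?A"
    by (rule inj_onI) (metis insert_Diff mem_Collect_eq)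
  moreover have "(\<lambda>T. T - {k}) ` ?A \<subseteq> ?B"
    using finite_subset by (fastforce simp: card_Diff_singleton)
  moreover have "finite ?B"
    by (rule finite_subset[of _ "Pow {..<n}"]) auto
  ultimately have "card ?A \<le> card ?B"
    by (rule card_inj_on_le)
  also have "card ?B = card ({..<n} - {k}) choose (t - 1)"
    by (rule n_subsets) simp
  finally show ?thesis
    using assms by simp
qed

lemma insert_Diff_in_subsets_of_card:
  assumes "T \<subseteq> {..<n::nat}" "card T = t" "k < n" "k \<notin> T" "u \<in> T"
  shows "insert k T - {u} \<subseteq> {..<n} \<and> card (insert k T - {u}) = t"
proof -
  have "finite T" using assms(1) finite_subset by blast
  with assms show ?thesis
    by (auto simp: card_Diff_singleton_if)
qed

lemma length_filter_product_snd:
  "length (filter (\<lambda>(x, y). P y) (List.product xs ys)) = length xs * length (filter P ys)"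
  by (induction xs) (auto simp: comp_def split_beta)

lemma Suc_times_binomial_eq_diff_times_binomial:
  "Suc t * (n choose Suc t) = (n - t) * (n choose t)"
  by (simp only: binomial_absorption binomial_absorb_comp)

lemma exists_multiple_frac_less:
  fixes x \<epsilon> :: real
  assumes "0 \<le> x" "0 < \<epsilon>"
  shows "\<exists>k t. 0 < k \<and> real t \<le> x * real k \<and> x * real k < real t + \<epsilon>"
proof -
  define N where "N = Suc (nat \<lceil>1 / \<epsilon>\<rceil>)"
  have "1 / \<epsilon> < real N"
    unfolding N_def of_nat_Suc using real_nat_ceiling_ge[of "1 / \<epsilon>"] by linarith
  moreover have "0 < N"
    by (simp add: N_def)
  ultimately have N: "0 < N" "1 / real N \<le> \<epsilon>" "1 / real N \<le> 1"
    using assms(2) by (simp_all add: field_simps)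
  obtain h k where k: "0 < k" and hk: "\<bar>of_int k * x - of_int h\<bar> < 1 / N"
    using Dirichlet_approx[OF N(1)] by blast
  have kx: "0 \<le> of_int k * x"
    using k assms(1) by simp
  show ?thesis
  proof (cases "of_int h \<le> of_int k * x")
    case True
    have "(-1 :: real) < of_int h"
      using hk N(3) kx unfolding abs_less_iff by linarith
    then have "0 \<le> h"
      by simp
    with True hk N(2) k(1)
    have "0 < nat k" "real (nat h) \<le> x * real (nat k)" "x * real (nat k) < real (nat h) + \<epsilon>"
      by (auto simp: mult.commute)
    then show ?thesis
      by blast
  next
    case False
    (* k x lies just below the integer h; with m = \<lfloor>1 / \<delta>\<rfloor> for the gap \<delta>, the multiple
       m k x = (m h - 1) + (1 - m \<delta>) lies just above the integer m h - 1, since 0 \<le> 1 - m \<delta> < \<delta>. *)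
    define \<delta> where "\<delta> = of_int h - of_int k * x"
    have \<delta>: "0 < \<delta>" "\<delta> < \<epsilon>" "\<delta> < 1"
      using False hk N(2,3) unfolding \<delta>_def abs_less_iff by linarith+
    have "0 < h"
      using False kx by simp
    define m where "m = nat \<lfloor>1 / \<delta>\<rfloor>"
    have fl: "1 \<le> \<lfloor>1 / \<delta>\<rfloor>"
      using \<delta> by (simp add: le_floor_iff)
    then have "0 < m"
      by (simp add: m_def)
    have "real m = of_int \<lfloor>1 / \<delta>\<rfloor>"
      unfolding m_def by (rule of_nat_nat) (use fl in linarith)
    then have "real m \<le> 1 / \<delta>" "1 / \<delta> - 1 < real m"
      using floor_correct[of "1 / \<delta>"] by linarith+
    then have m: "real m * \<delta> \<le> 1" "1 - \<delta> < real m * \<delta>" "0 < m"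
      using \<delta>(1) \<open>0 < m\<close> by (simp_all add: field_simps)
    have "0 < m * nat h"
      using m(3) \<open>0 < h\<close> by simp
    then have "x * real (m * nat k) - real (m * nat h - 1) = 1 - real m * \<delta>"
      using k(1) \<open>0 < h\<close> by (simp add: \<delta>_def of_nat_diff algebra_simps)
    with m k(1) \<delta>(2) have "0 < m * nat k" "real (m * nat h - 1) \<le> x * real (m * nat k)"
      "x * real (m * nat k) < real (m * nat h - 1) + \<epsilon>"
      by auto
    then show ?thesis
      by blast
  qed
qed

lemma exists_large_multiple_frac_less:
  fixes x \<epsilon> :: real and U :: nat
  assumes "0 \<le> x" "0 < \<epsilon>"
  shows "\<exists>Kv t. U \<le> Kv \<and> real t \<le> x * real Kv \<and> x * real Kv < real t + \<epsilon>"
proof -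
  obtain k t :: nat where k: "0 < k" "real t \<le> x * real k" "x * real k < real t + \<epsilon> / Suc U"
    using exists_multiple_frac_less[OF assms(1), of "\<epsilon> / Suc U"] assms(2) by auto
  have "U \<le> Suc U * k"
    using k(1) mult_le_mono2[of 1 k "Suc U"] by simp
  moreover have "real (Suc U * t) \<le> x * real (Suc U * k)"
    using mult_left_mono[OF k(2), of "real (Suc U)"] by (simp add: algebra_simps)
  moreover have "x * real (Suc U * k) < real (Suc U * t) + \<epsilon>"
    using k(3) by (simp add: field_simps)
  ultimately show ?thesis
    by blast
qed

lemma le_mult_if_nat_ceiling_divide_le:
  fixes a g :: real
  assumes "0 < g" "nat \<lceil>a / g\<rceil> \<le> F"
  shows "a \<le> g * real F"
proof -
  have "a / g \<le> real F"
    using real_nat_ceiling_ge[of "a / g"] assms(2) by (meson of_nat_le_iff order_trans)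
  then show ?thesis
    using assms(1) by (simp add: pos_divide_le_eq mult.commute)
qed

lemma exists_coded_caching_parameters:
  fixes x :: real and U :: nat
  assumes "0 < x" "x < 1"
  shows "\<exists>Kv t. U \<le> Kv \<and> 0 < t \<and> t \<le> Kv \<and> real t \<le> x * real Kv
    \<and> real (Kv - t) / real (Suc t) < 1 / x - 1"
proof -
  obtain Kv t where Kv: "U + nat \<lceil>1 / x\<rceil> \<le> Kv"
    and t: "real t \<le> x * real Kv" "x * real Kv < real t + (1 - x)"
    using exists_large_multiple_frac_less[of x "1 - x" "U + nat \<lceil>1 / x\<rceil>"] assms by auto
  have "1 \<le> x * real (nat \<lceil>1 / x\<rceil>)"
    using real_nat_ceiling_ge[of "1 / x"] assms(1) by (simp only: pos_divide_le_eq mult.commute)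
  also have "\<dots> \<le> x * real Kv"
    using Kv assms(1) by (simp add: mult_left_mono)
  finally have "0 < t"
    using t(2) assms(1) by (cases t) auto
  moreover have "t \<le> Kv"
    using t(1) assms mult_left_le_one_le[of "real Kv" x] by linarith
  moreover have "x * real (Kv - t) < (1 - x) * real (Suc t)"
    using t(2) \<open>t \<le> Kv\<close> by (simp add: of_nat_diff algebra_simps)
  then have "real (Kv - t) / real (Suc t) < 1 / x - 1"
    using assms(1) by (simp add: field_simps)
  ultimately show ?thesis
    using Kv t(1) by (meson add_leE)
qed

lemma of_nat_times_div_le: "real b * real (a div b) \<le> real a"
  by (metis of_nat_le_iff of_nat_mult times_div_less_eq_dividend)

lemma real_binomial_cache_share_le:
  assumes "0 < t" "real t \<le> x * real Kv"
  shows "real (n * ((Kv - 1) choose (t - 1)) * (F div (Kv choose t))) \<le> real n * x * real F"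
proof -
  let ?B = "(Kv - 1) choose (t - 1)" and ?s = "F div (Kv choose t)"
  have "0 < Kv"
    using assms by (cases Kv) auto
  have "?B * ?s * Kv = t * ((Kv choose t) * ?s)"
    using times_binomial_minus1_eq[OF assms(1), of Kv] by (simp add: algebra_simps)
  then have "real (?B * ?s) * real Kv = real t * real ((Kv choose t) * ?s)"
    by (metis of_nat_mult)
  also have "\<dots> \<le> real t * real F"
    using of_nat_times_div_le[of "Kv choose t" F] by (intro mult_left_mono) simp_all
  also have "\<dots> \<le> x * real F * real Kv"
    using mult_right_mono[OF assms(2), of "real F"] by (simp add: algebra_simps)
  finally have "real (?B * ?s) * real Kv \<le> x * real F * real Kv" .
  then have "real (?B * ?s) \<le> x * real F"
    by (rule mult_right_le_imp_le) (use \<open>0 < Kv\<close> in simp)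
  then show ?thesis
    using mult_left_mono[of "real (?B * ?s)" "x * real F" "real n"] by (simp add: mult.assoc)
qed

lemma real_binomial_message_share_le:
  "real ((Kv choose Suc t) * (F div (Kv choose t))) \<le> real (Kv - t) / real (Suc t) * real F"
proof -
  let ?s = "F div (Kv choose t)"
  have "Suc t * ((Kv choose Suc t) * ?s) = (Kv - t) * ((Kv choose t) * ?s)"
    using Suc_times_binomial_eq_diff_times_binomial[of t Kv] by (metis mult.assoc)
  then have "real (Suc t) * real ((Kv choose Suc t) * ?s) = real (Kv - t) * real ((Kv choose t) * ?s)"
    by (metis of_nat_mult)
  also have "\<dots> \<le> real (Kv - t) * real F"
    using of_nat_times_div_le[of "Kv choose t" F] by (intro mult_left_mono) simp_all
  finally have "real ((Kv choose Suc t) * ?s) \<le> real (Kv - t) * real F / real (Suc t)"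
    by (subst pos_le_divide_eq) (simp_all add: mult.commute)
  then show ?thesis
    by (simp only: times_divide_eq_left)
qed

type_synonym library = "nat \<Rightarrow> nat \<Rightarrow> bool list"
type_synonym demand = "nat \<Rightarrow> nat \<times> nat"

(* Users 0..<U are embedded into the Kv virtual users. A user of a level in H, or a virtual user,
   is treated as requesting a fixed coded file (request), so that every (t+1)-subset of virtual
   users yields a message. Caches and broadcasts are padded to the exact lengths
   nat \<lfloor>M F\<rfloor> = m and nat \<lfloor>R F\<rfloor> = n. *)
locale coded_caching =
  fixes L :: nat and N K :: "nat \<Rightarrow> nat" and H :: "nat set"
    and Kv t F m n :: nat
begin

definition U :: nat where
  "U = total_users K L"

definition coded_files :: "(nat \<times> nat) list" where
  "coded_files = distinct_list_of (SIGMA i:{1..L} - H. {..<N i})"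

definition C :: nat where
  "C = Kv choose t"

definition s :: nat where
  "s = F div C"

definition index_sets :: "nat set list" where
  "index_sets = distinct_list_of {T. T \<subseteq> {..<Kv} \<and> card T = t}"

definition message_sets :: "nat set list" where
  "message_sets = distinct_list_of {S. S \<subseteq> {..<Kv} \<and> card S = Suc t}"

definition subfile :: "library \<Rightarrow> nat \<times> nat \<Rightarrow> nat set \<Rightarrow> bool list" where
  "subfile W f T = block s (W (fst f) (snd f)) (position index_sets T)"

definition cached :: "nat \<Rightarrow> ((nat \<times> nat) \<times> nat set) list" where
  "cached k = filter (\<lambda>(f, T). k \<in> T) (List.product coded_files index_sets)"

definition cache_content :: "nat \<Rightarrow> library \<Rightarrow> bool list" where
  "cache_content k W = concat (map (\<lambda>(f, T). subfile W f T) (cached k))"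

definition cache :: "nat \<Rightarrow> library \<Rightarrow> bool list" where
  "cache k W = pad m (cache_content k W)"

definition request :: "demand \<Rightarrow> nat \<Rightarrow> nat \<times> nat" where
  "request d u = (if u < U \<and> fst (d u) \<notin> H then d u else hd coded_files)"

definition message :: "demand \<Rightarrow> library \<Rightarrow> nat set \<Rightarrow> bool list" where
  "message d W S = xor_sum S (\<lambda>u. subfile W (request d u) (S - {u})) s"

definition residual_length :: "demand \<Rightarrow> nat \<Rightarrow> nat" where
  "residual_length d j = (if fst (d j) \<in> H then F else F - C * s)"

definition residual :: "demand \<Rightarrow> library \<Rightarrow> nat \<Rightarrow> bool list" where
  "residual d W j =
    (if fst (d j) \<in> H then W (fst (d j)) (snd (d j)) else drop (C * s) (W (fst (d j)) (snd (d j))))"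

definition broadcast_content :: "demand \<Rightarrow> library \<Rightarrow> bool list" where
  "broadcast_content d W =
    concat (map (message d W) message_sets) @ concat (map (residual d W) [0..<U])"

definition broadcast_length :: "demand \<Rightarrow> nat" where
  "broadcast_length d = length message_sets * s + (\<Sum>j<U. residual_length d j)"

definition broadcast :: "demand \<Rightarrow> library \<Rightarrow> bool list" where
  "broadcast d W = pad n (broadcast_content d W)"

definition decode_subfile ::
    "demand \<Rightarrow> nat \<Rightarrow> bool list \<Rightarrow> bool list \<Rightarrow> nat set \<Rightarrow> bool list" where
  "decode_subfile d k msgs c T =
    (if k \<in> T then block s c (position (cached k) (d k, T))
     else map2 (\<noteq>) (block s msgs (position message_sets (insert k T)))
       (xor_sum T (\<lambda>u. block s c (position (cached k) (request d u, insert k T - {u}))) s))"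

definition decoder :: "demand \<Rightarrow> nat \<Rightarrow> bool list \<Rightarrow> bool list \<Rightarrow> bool list" where
  "decoder d k b c =
    (let b' = take (broadcast_length d) b;
         msgs = take (length message_sets * s) b';
         own = take (residual_length d k)
           (drop (\<Sum>j<k. residual_length d j) (drop (length message_sets * s) b'))
     in if fst (d k) \<in> H then own
        else concat (map (decode_subfile d k msgs (take (length (cached k) * s) c)) index_sets) @ own)"

lemma index_sets: "distinct index_sets" "set index_sets = {T. T \<subseteq> {..<Kv} \<and> card T = t}"
  using distinct_list_of[OF finite_subsets_of_card] by (auto simp: index_sets_def)

lemma message_sets:
  "distinct message_sets" "set message_sets = {S. S \<subseteq> {..<Kv} \<and> card S = Suc t}"
  using distinct_list_of[OF finite_subsets_of_card] by (auto simp: message_sets_def)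

lemma length_index_sets: "length index_sets = C"
  using index_sets by (simp add: distinct_card[symmetric] n_subsets C_def)

lemma length_message_sets: "length message_sets = Kv choose Suc t"
  using message_sets by (simp add: distinct_card[symmetric] n_subsets)

lemma C_times_s_le: "C * s \<le> F"
  by (simp add: s_def mult.commute)

lemma coded_files:
  "distinct coded_files" "set coded_files = (SIGMA i:{1..L} - H. {..<N i})"
  using distinct_list_of[of "SIGMA i:{1..L} - H. {..<N i}"] by (auto simp: coded_files_def)

lemma coded_files_iff: "f \<in> set coded_files \<longleftrightarrow> fst f \<in> {1..L} - H \<and> snd f < N (fst f)"
  by (cases f) (simp add: coded_files(2))

lemma length_coded_files: "length coded_files = (\<Sum>i\<in>{1..L} - H. N i)"
  using coded_files by (simp add: distinct_card[symmetric] card_SigmaI)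

lemma length_file:
  "W \<in> libraries L N F \<Longrightarrow> fst f \<in> {1..L} \<Longrightarrow> snd f < N (fst f)
    \<Longrightarrow> length (W (fst f) (snd f)) = F"
  unfolding libraries_def by (metis (mono_tags, lifting) mem_Collect_eq)

lemma admissible_demandD:
  assumes "admissible_demand L N K d" "k < U"
  shows "fst (d k) \<in> {1..L}" "snd (d k) < N (fst (d k))"
  using assms unfolding admissible_demand_def U_def by auto

lemma length_subfile:
  assumes "W \<in> libraries L N F" "f \<in> set coded_files" "T \<in> set index_sets"
  shows "length (subfile W f T) = s"
proof -
  have "Suc (position index_sets T) \<le> C"
    using position_less[OF index_sets(1) assms(3)] by (simp add: length_index_sets)
  then have "Suc (position index_sets T) * s \<le> C * s"
    by (rule mult_le_mono1)
  with C_times_s_le length_file[OF assms(1)] assms(2) show ?thesis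
    by (simp add: subfile_def block_def coded_files_iff)
qed

lemma request_in_coded_files:
  assumes "admissible_demand L N K d" "coded_files \<noteq> []"
  shows "request d u \<in> set coded_files"
proof (cases "u < U \<and> fst (d u) \<notin> H")
  case True
  then show ?thesis
    using admissible_demandD[OF assms(1)] by (simp add: request_def coded_files_iff)
next
  case False
  then show ?thesis
    using assms(2) by (auto simp: request_def hd_in_set)
qed

lemma length_residual:
  assumes "W \<in> libraries L N F" "admissible_demand L N K d" "j < U"
  shows "length (residual d W j) = residual_length d j"
  using length_file[OF assms(1)] admissible_demandD[OF assms(2,3)]
  by (simp add: residual_def residual_length_def)

lemma length_broadcast_content:
  assumes "W \<in> libraries L N F" "admissible_demand L N K d"
  shows "length (broadcast_content d W) = broadcast_length d"
  using length_residual[OF assms]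
  by (simp add: broadcast_content_def broadcast_length_def message_def length_concat_map_const
      length_concat sum_list_sum_nth atLeast0LessThan)

lemma cached_iff:
  "x \<in> set (cached k) \<longleftrightarrow>
    fst x \<in> set coded_files \<and> snd x \<in> set index_sets \<and> k \<in> snd x"
  by (cases x) (auto simp: cached_def)

lemma distinct_cached: "distinct (cached k)"
  by (simp add: cached_def distinct_product coded_files(1) index_sets(1))

lemma length_cache_content:
  "W \<in> libraries L N F \<Longrightarrow> length (cache_content k W) = length (cached k) * s"
  unfolding cache_content_def
  by (rule length_concat_map_const) (auto simp: cached_iff length_subfile)

lemma block_cache:
  assumes "W \<in> libraries L N F" "length (cached k) * s \<le> m" "x \<in> set (cached k)"
  shows "block s (take (length (cached k) * s) (cache k W)) (position (cached k) x)
    = subfile W (fst x) (snd x)"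
proof -
  have "take (length (cached k) * s) (cache k W) = cache_content k W"
    using take_length_pad[of "cache_content k W" m] assms(1,2)
    by (simp add: cache_def length_cache_content)
  moreover have "block s (cache_content k W) (position (cached k) x) = (\<lambda>(f, T). subfile W f T) x"
    unfolding cache_content_def
    by (rule block_position_concat_map[OF distinct_cached assms(3)])
      (auto simp: split_beta cached_iff length_subfile[OF assms(1)])
  ultimately show ?thesis
    by (simp add: split_beta)
qed

lemma take_broadcast:
  assumes "W \<in> libraries L N F" "admissible_demand L N K d" "broadcast_length d \<le> n"
  shows "take (broadcast_length d) (broadcast d W) = broadcast_content d W"
  using take_length_pad[of "broadcast_content d W" n] length_broadcast_content[OF assms(1,2)] assms(3)
  by (simp add: broadcast_def)

lemma length_messages: "length (concat (map (message d W) message_sets)) = length message_sets * s"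
  by (rule length_concat_map_const) (simp add: message_def)

lemma block_messages:
  assumes "S \<in> set message_sets"
  shows "block s (take (length message_sets * s) (broadcast_content d W)) (position message_sets S)
    = message d W S"
  using assms message_sets(1) length_messages[of d W]
  by (simp add: broadcast_content_def message_def block_position_concat_map)

lemma residual_in_broadcast:
  assumes "W \<in> libraries L N F" "admissible_demand L N K d" "k < U"
  shows "take (residual_length d k)
      (drop (\<Sum>j<k. residual_length d j) (drop (length message_sets * s) (broadcast_content d W)))
    = residual d W k"
proof -
  let ?xss = "map (residual d W) [0..<U]"
  have "\<And>j. j < U \<Longrightarrow> length (?xss ! j) = residual_length d j"
    using length_residual[OF assms(1,2)] by simp
  then have "take (length (?xss ! k)) (drop (\<Sum>j<k. length (?xss ! j)) (concat ?xss))
      = take (residual_length d k) (drop (\<Sum>j<k. residual_length d j) (concat ?xss))"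
    using assms(3) by simp
  then show ?thesis
    using take_drop_concat[of k ?xss] assms(3) length_messages[of d W]
    by (simp add: broadcast_content_def)
qed

lemma request_coded:
  assumes "admissible_demand L N K d" "k < U" "fst (d k) \<notin> H"
  shows "d k \<in> set coded_files" "request d k = d k"
  using admissible_demandD[OF assms(1,2)] assms(2,3) by (simp_all add: coded_files_iff request_def)

lemma insert_in_message_sets:
  assumes "T \<in> set index_sets" "k < Kv" "k \<notin> T"
  shows "insert k T \<in> set message_sets"
proof -
  have "T \<subseteq> {..<Kv}" "card T = t"
    using assms(1) index_sets(2) by auto
  with assms(2,3) show ?thesis
    using finite_subset[of T "{..<Kv}"] by (simp add: message_sets(2))
qed

lemma request_in_cached:
  assumes "admissible_demand L N K d" "coded_files \<noteq> []"
    and "T \<in> set index_sets" "k < Kv" "k \<notin> T" "u \<in> T"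
  shows "(request d u, insert k T - {u}) \<in> set (cached k)"
proof -
  have "T \<subseteq> {..<Kv}" "card T = t"
    using assms(3) index_sets(2) by auto
  then have "insert k T - {u} \<in> set index_sets"
    using insert_Diff_in_subsets_of_card[of T Kv t k u] assms(4-6) by (simp add: index_sets(2))
  then show ?thesis
    using request_in_coded_files[OF assms(1,2)] assms(5,6) by (auto simp: cached_iff)
qed

(* For k \<notin> T, the message of S = insert k T is the XOR of the wanted subfile with subfiles
   indexed by the sets S - {u}, u \<in> T, which all contain k and hence lie in cache k. *)
lemma decode_subfile_correct:
  assumes W: "W \<in> libraries L N F" and d: "admissible_demand L N K d"
    and k: "k < U" "U \<le> Kv" "fst (d k) \<notin> H" and T: "T \<in> set index_sets"
    and stored: "\<And>x. x \<in> set (cached k) \<Longrightarrow> block s c (position (cached k) x) = subfile W (fst x) (snd x)"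
    and received: "\<And>S. S \<in> set message_sets \<Longrightarrow> block s msgs (position message_sets S) = message d W S"
  shows "decode_subfile d k msgs c T = subfile W (d k) T"
proof (cases "k \<in> T")
  case True
  then show ?thesis
    using T stored[of "(d k, T)"] request_coded[OF d k(1,3)] by (simp add: decode_subfile_def cached_iff)
next
  case False
  let ?S = "insert k T"
  note dk = request_coded[OF d k(1,3)]
  have "k < Kv" "coded_files \<noteq> []"
    using k dk(1) by auto
  have cached_neighbour:
    "block s c (position (cached k) (request d u, ?S - {u})) = subfile W (request d u) (?S - {u})"
    if "u \<in> T" for u
    using stored[OF request_in_cached[OF d \<open>coded_files \<noteq> []\<close> T \<open>k < Kv\<close> False that]] by simp
  have "?S - {k} = T"
    using False by simp
  then have "xor_sum T (\<lambda>u. block s c (position (cached k) (request d u, ?S - {u}))) s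
      = xor_sum (?S - {k}) (\<lambda>u. subfile W (request d u) (?S - {u})) s"
    by (simp only:) (rule xor_sum_cong, rule cached_neighbour)
  moreover have "map2 (\<noteq>) (message d W ?S) (xor_sum (?S - {k}) (\<lambda>u. subfile W (request d u) (?S - {u})) s)
      = subfile W (request d k) (?S - {k})"
    unfolding message_def
    using finite_subset[of T "{..<Kv}"] T length_subfile[OF W dk(1) T] False dk(2)
    by (intro xor_sum_remove) (auto simp: index_sets(2))
  ultimately show ?thesis
    using received[OF insert_in_message_sets[OF T \<open>k < Kv\<close> False]] False dk(2)
    by (simp add: decode_subfile_def)
qed

lemma decoder_correct:
  assumes W: "W \<in> libraries L N F" and d: "admissible_demand L N K d"
    and k: "k < U" "U \<le> Kv"
    and cache_size: "length (cached k) * s \<le> m" and broadcast_size: "broadcast_length d \<le> n"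
  shows "decoder d k (broadcast d W) (cache k W) = W (fst (d k)) (snd (d k))"
proof -
  define w where "w = W (fst (d k)) (snd (d k))"
  have own: "take (residual_length d k) (drop (\<Sum>j<k. residual_length d j)
      (drop (length message_sets * s) (take (broadcast_length d) (broadcast d W)))) = residual d W k"
    using take_broadcast[OF W d broadcast_size] residual_in_broadcast[OF W d k(1)] by simp
  show ?thesis
  proof (cases "fst (d k) \<in> H")
    case True
    then show ?thesis
      using own by (simp add: decoder_def residual_def)
  next
    case False
    define msgs where "msgs = take (length message_sets * s) (take (broadcast_length d) (broadcast d W))"
    define c where "c = take (length (cached k) * s) (cache k W)"
    have "decode_subfile d k msgs c T = subfile W (d k) T" if "T \<in> set index_sets" for T
      using decode_subfile_correct[OF W d k False that] block_cache[OF W cache_size]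
        block_messages take_broadcast[OF W d broadcast_size] by (simp add: msgs_def c_def)
    then have "concat (map (decode_subfile d k msgs c) index_sets)
        = concat (map (subfile W (d k)) index_sets)"
      by (simp cong: map_cong)
    also have "\<dots> = concat (map (block s w) [0..<C])"
      using map_position_eq_map_upt[OF index_sets(1), of "block s w"]
      by (simp add: subfile_def[abs_def] w_def length_index_sets)
    also have "\<dots> = take (C * s) w"
      using length_file[OF W admissible_demandD[OF d k(1)]] C_times_s_le
      by (simp add: concat_map_block w_def)
    finally show ?thesis
      using own False by (simp add: decoder_def residual_def w_def msgs_def c_def Let_def)
  qed
qed

lemma length_cached_le:
  assumes "k < Kv" "0 < t"
  shows "length (cached k) \<le> (\<Sum>i\<in>{1..L} - H. N i) * ((Kv - 1) choose (t - 1))"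
proof -
  have "{T. k \<in> T} \<inter> set index_sets = {T. T \<subseteq> {..<Kv} \<and> card T = t \<and> k \<in> T}"
    using index_sets(2) by auto
  then have "length (filter (\<lambda>T. k \<in> T) index_sets)
      = card {T. T \<subseteq> {..<Kv} \<and> card T = t \<and> k \<in> T}"
    using distinct_length_filter[OF index_sets(1)] by metis
  also have "\<dots> \<le> (Kv - 1) choose (t - 1)"
    using card_subsets_containing[OF assms] .
  finally show ?thesis
    by (simp add: cached_def length_filter_product_snd length_coded_files)
qed

lemma card_users_requesting:
  assumes "admissible_demand L N K d" "A \<subseteq> {1..L}"
  shows "card {j. j < U \<and> fst (d j) \<in> A} = (\<Sum>i\<in>A. K i)"
proof -
  have "{j. j < U \<and> fst (d j) \<in> A} = (\<Union>i\<in>A. {j. j < U \<and> fst (d j) = i})"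
    by auto
  moreover have "finite A"
    using assms(2) finite_subset by blast
  moreover have "card (\<Union>i\<in>A. {j. j < U \<and> fst (d j) = i}) = (\<Sum>i\<in>A. card {j. j < U \<and> fst (d j) = i})"
    by (rule card_UN_disjoint) (use \<open>finite A\<close> in auto)
  ultimately have "card {j. j < U \<and> fst (d j) \<in> A} = (\<Sum>i\<in>A. card {j. j < U \<and> fst (d j) = i})"
    by simp
  also have "\<dots> = (\<Sum>i\<in>A. K i)"
    using assms by (intro sum.cong) (auto simp: admissible_demand_def U_def)
  finally show ?thesis .
qed

lemma broadcast_length_le:
  assumes "admissible_demand L N K d" "H \<subseteq> {1..L}"
  shows "broadcast_length d \<le> (Kv choose Suc t) * s + (\<Sum>h\<in>H. K h) * F + U * (F mod C)"
proof -
  let ?P = "\<lambda>j. fst (d j) \<in> H"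
  have "(\<Sum>j<U. residual_length d j)
      = (\<Sum>j\<in>{..<U} \<inter> {j. ?P j}. F) + (\<Sum>j\<in>{..<U} \<inter> - {j. ?P j}. F mod C)"
    unfolding residual_length_def s_def minus_mult_div_eq_mod by (rule sum.If_cases) simp
  also have "\<dots> = card ({..<U} \<inter> {j. ?P j}) * F + card ({..<U} \<inter> - {j. ?P j}) * (F mod C)"
    by simp
  also have "card ({..<U} \<inter> {j. ?P j}) = (\<Sum>h\<in>H. K h)"
    using card_users_requesting[OF assms] by (simp add: Int_def)
  also have "card ({..<U} \<inter> - {j. ?P j}) * (F mod C) \<le> U * (F mod C)"
    by (rule mult_le_mono1) (metis card_lessThan Int_lower1 card_mono finite_lessThan)
  finally show ?thesis
    by (simp add: broadcast_length_def length_message_sets)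
qed

lemma scheme_exists_if_sizes_fit:
  fixes M R :: real
  assumes "U \<le> Kv" "0 \<le> eps" "m = nat \<lfloor>M * real F\<rfloor>" "n = nat \<lfloor>R * real F\<rfloor>"
    and "\<And>k. k < U \<Longrightarrow> length (cached k) * s \<le> m"
    and "\<And>d. admissible_demand L N K d \<Longrightarrow> broadcast_length d \<le> n"
  shows "scheme_exists L N K R M F eps"
  unfolding scheme_exists_def
proof (intro exI conjI allI impI)
  show "length (cache k W) = nat \<lfloor>M * real F\<rfloor>" for k W
    unfolding cache_def using assms(3) by simp
  show "length (broadcast d W) = nat \<lfloor>R * real F\<rfloor>" for d W
    unfolding broadcast_def using assms(4) by simp
  fix d assume d: "admissible_demand L N K d"
  have no_error: "{W \<in> libraries L N F. \<exists>k<total_users K L.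
      decoder d k (broadcast d W) (cache k W) \<noteq> W (fst (d k)) (snd (d k))} = {}"
    using decoder_correct[OF _ d _ assms(1) assms(5)] assms(6)[OF d] by (auto simp: U_def)
  show "real (card {W \<in> libraries L N F. \<exists>k<total_users K L.
      decoder d k (broadcast d W) (cache k W) \<noteq> W (fst (d k)) (snd (d k))})
    \<le> eps * real (card (libraries L N F))"
    unfolding no_error using assms(2) by simp
qed

end

lemma scheme_exists_coded_caching:
  fixes M R :: real
  assumes "H \<subseteq> {1..L}" "total_users K L \<le> Kv" "0 < t" "0 \<le> eps"
    and "real ((\<Sum>i\<in>{1..L} - H. N i) * ((Kv - 1) choose (t - 1)) * (F div (Kv choose t)))
      \<le> M * real F"
    and "real ((Kv choose Suc t) * (F div (Kv choose t)) + (\<Sum>h\<in>H. K h) * F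
      + total_users K L * (F mod (Kv choose t))) \<le> R * real F"
  shows "scheme_exists L N K R M F eps"
proof -
  interpret coded_caching L N K H Kv t F "nat \<lfloor>M * real F\<rfloor>" "nat \<lfloor>R * real F\<rfloor>" .
  show ?thesis
  proof (rule scheme_exists_if_sizes_fit)
    fix k assume "k < U"
    then have "length (cached k) * s \<le> (\<Sum>i\<in>{1..L} - H. N i) * ((Kv - 1) choose (t - 1)) * s"
      using length_cached_le assms(2,3) by (simp add: U_def)
    then have "real (length (cached k) * s) \<le> M * real F"
      using assms(5) unfolding s_def C_def by (meson of_nat_le_iff order_trans)
    then show "length (cached k) * s \<le> nat \<lfloor>M * real F\<rfloor>"
      by (rule le_nat_floor)
  next
    fix d assume "admissible_demand L N K d"
    then have "real (broadcast_length d) \<le> R * real F"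
      using broadcast_length_le assms(1,6) unfolding s_def C_def U_def
      by (meson of_nat_le_iff order_trans)
    then show "broadcast_length d \<le> nat \<lfloor>R * real F\<rfloor>"
      by (rule le_nat_floor)
  qed (use assms(2,4) in \<open>simp_all add: U_def\<close>)
qed

lemma achievable_if_coded_levels_fit_in_cache:
  assumes "H \<subseteq> {1..L}" "real (\<Sum>i\<in>{1..L} - H. N i) \<le> M" "real (\<Sum>h\<in>H. K h) \<le> R"
  shows "achievable L N K R M"
  unfolding achievable_def
proof (intro allI impI exI)
  fix eps :: real and F :: nat assume "0 < eps"
  (* With t = Kv every cache holds all coded files and there are no XOR messages. *)
  let ?Kv = "Suc (total_users K L)"
  show "scheme_exists L N K R M F eps"
  proof (rule scheme_exists_coded_caching[where Kv = ?Kv and t = ?Kv])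
    show "real ((\<Sum>i\<in>{1..L} - H. N i) * ((?Kv - 1) choose (?Kv - 1)) * (F div (?Kv choose ?Kv)))
        \<le> M * real F"
      using assms(2) by (simp add: mult_right_mono)
    show "real ((?Kv choose Suc ?Kv) * (F div (?Kv choose ?Kv)) + (\<Sum>h\<in>H. K h) * F
        + total_users K L * (F mod (?Kv choose ?Kv))) \<le> R * real F"
      using assms(3) by (simp add: binomial_eq_0 mult_right_mono)
  qed (use assms(1) \<open>0 < eps\<close> in auto)
qed

lemma coded_broadcast_size_le:
  assumes "0 < Kv choose t" "real (U * (Kv choose t)) \<le> g * real F"
    and "real (Kv - t) / real (Suc t) + real S + g \<le> R"
  shows "real ((Kv choose Suc t) * (F div (Kv choose t)) + S * F + U * (F mod (Kv choose t)))
    \<le> R * real F"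
proof -
  have "U * (F mod (Kv choose t)) \<le> U * (Kv choose t)"
    using assms(1) by simp
  then have "real (U * (F mod (Kv choose t))) \<le> g * real F"
    using assms(2) by (meson of_nat_le_iff order_trans)
  then have "real ((Kv choose Suc t) * (F div (Kv choose t)) + S * F + U * (F mod (Kv choose t)))
      \<le> (real (Kv - t) / real (Suc t) + real S + g) * real F"
    using real_binomial_message_share_le[of Kv t F] unfolding distrib_right by simp
  also have "\<dots> \<le> R * real F"
    using assms(3) by (rule mult_right_mono) simp
  finally show ?thesis .
qed

lemma achievable_if_coded_levels_exceed_cache:
  assumes "H \<subseteq> {1..L}" "0 < M" "M < real (\<Sum>i\<in>{1..L} - H. N i)"
    and "real (\<Sum>h\<in>H. K h) + real (\<Sum>i\<in>{1..L} - H. N i) / M - 1 \<le> R"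
  shows "achievable L N K R M"
  unfolding achievable_def
proof (intro allI impI)
  fix eps :: real assume "0 < eps"
  define NI where "NI = real (\<Sum>i\<in>{1..L} - H. N i)"
  define x where "x = M / NI"
  have x: "0 < x" "x < 1" "NI * x = M"
    using assms(2,3) by (simp_all add: x_def NI_def)
  obtain Kv t where Kv: "total_users K L \<le> Kv" "0 < t" "t \<le> Kv" "real t \<le> x * real Kv"
    and rate: "real (Kv - t) / real (Suc t) < 1 / x - 1"
    using exists_coded_caching_parameters[OF x(1,2)] by blast
  define g where "g = 1 / x - 1 - real (Kv - t) / real (Suc t)"
  have "0 < g"
    using rate unfolding g_def by linarith
  have "1 / x = NI / M"
    by (simp add: x_def)
  then have rate_le: "real (Kv - t) / real (Suc t) + real (\<Sum>h\<in>H. K h) + g \<le> R"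
    using assms(4) unfolding g_def NI_def by linarith
  show "\<exists>F0. \<forall>F\<ge>F0. scheme_exists L N K R M F eps"
  proof (intro exI allI impI)
    fix F :: nat assume "nat \<lceil>real (total_users K L * (Kv choose t)) / g\<rceil> \<le> F"
    then have residual: "real (total_users K L * (Kv choose t)) \<le> g * real F"
      by (rule le_mult_if_nat_ceiling_divide_le[OF \<open>0 < g\<close>])
    show "scheme_exists L N K R M F eps"
    proof (rule scheme_exists_coded_caching[OF assms(1) Kv(1,2) less_imp_le[OF \<open>0 < eps\<close>]])
      show "real ((\<Sum>i\<in>{1..L} - H. N i) * ((Kv - 1) choose (t - 1)) * (F div (Kv choose t)))
          \<le> M * real F"
        using real_binomial_cache_share_le[OF Kv(2,4), of "\<Sum>i\<in>{1..L} - H. N i" F]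
        by (simp only: x(3)[unfolded NI_def])
      show "real ((Kv choose Suc t) * (F div (Kv choose t)) + (\<Sum>h\<in>H. K h) * F
          + total_users K L * (F mod (Kv choose t))) \<le> R * real F"
        using Kv(3) by (intro coded_broadcast_size_le[OF _ residual rate_le]) simp
    qed
  qed
qed

theorem theorem3:
  fixes L :: nat and N K :: "nat \<Rightarrow> nat" and M :: real
  assumes "\<forall>i \<in> {1..L}. K i \<ge> 1"
    and "\<forall>i \<in> {1..L}. N i \<ge> K i"
    and "M \<ge> 0"
  shows "achievable L N K (R_SU L N K M) M"
proof -
  define H where "H = {h \<in> {1..L}. M < real (N h) / real (K h)}"
  define I where "I = {1..L} - H"
  have "H \<subseteq> {1..L}"
    by (auto simp: H_def)
  have R: "R_SU L N K M = real (\<Sum>h\<in>H. K h) + (if I = {} then 0 else max (real (\<Sum>i\<in>I. N i) / M - 1) 0)"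
    unfolding R_SU_def Let_def H_def[symmetric] I_def[symmetric] by (simp add: sum_divide_distrib)
  show ?thesis
  proof (cases "real (\<Sum>i\<in>I. N i) \<le> M")
    case True
    then show ?thesis
      unfolding I_def by (rule achievable_if_coded_levels_fit_in_cache[OF \<open>H \<subseteq> {1..L}\<close>]) (simp add: R)
  next
    case False
    then obtain i where "i \<in> I"
      using assms(3) by fastforce
    then have "i \<in> {1..L}" "real (N i) / real (K i) \<le> M"
      by (auto simp: I_def H_def)
    moreover have "1 \<le> K i" "K i \<le> N i"
      using assms(1,2) calculation(1) by blast+
    ultimately have "1 \<le> real (N i) / real (K i)" "real (N i) / real (K i) \<le> M"
      by (simp_all add: le_divide_eq_1)
    then have "0 < M"
      by linarith
    moreover have "real (\<Sum>h\<in>H. K h) + real (\<Sum>i\<in>I. N i) / M - 1 \<le> R_SU L N K M"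
      using \<open>i \<in> I\<close> by (auto simp: R)
    ultimately show ?thesis
      using False unfolding I_def
      by (intro achievable_if_coded_levels_exceed_cache[OF \<open>H \<subseteq> {1..L}\<close>]) simp_all
  qed
qed

end
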